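(* If $n\ge k\ge 3$, then the maximum defining $g_k(n)$ is achieved by an equitable partition; that is, there is a partition $n_1+\dots+n_k=n$ with $|n_i-n_j|\le1$ for all $i\ne j$ such that $g_k(n)=\sum_{i=1}^k g_k(n_i)+\prod_{i=1}^k n_i$.
   Context: The function $g_k$ is defined by: $g_k(s)=0$ for $0\le s<k$, and for $s\ge k\ge 3$, $g_k(s)=\max\left(\sum_{i=1}^k g_k(s_i)+\prod_{i=1}^k s_i\right)$, the maximum over all partitions $s_1+\dots+s_k=s$ into nonnegative integers with $s_i<s$ for each $i$. *)

theory Defs
  imports Main
begin

definition parts :: "nat \<Rightarrow> nat \<Rightarrow> nat list set" where
  "parts k s = {xs. length xs = k \<and> sum_list xs = s \<and> (\<forall>x\<in>set xs. x < s)}"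

function g :: "nat \<Rightarrow> nat \<Rightarrow> nat" where
  "g k s = (if s < k then 0
            else Max ((\<lambda>xs. sum_list (map (g k) xs) + prod_list xs) ` parts k s))"
  by auto
termination
  by (relation "measure snd") (auto simp: parts_def)

end

theory Submission
  imports Defs "HOL-Library.Multiset"
begin

(* Let equi_value k be the solution of the recursion in which every split is the
   equipartition; we show g k = equi_value k. The heart is that every split M of n into
   k parts satisfies sum (equi_value k) M + prod M <= equi_value k n, by induction on n:
   lowering the largest part x of M by one changes the left side by the increment of
   equi_value k at x - 1 plus the product of the other parts, which is at most
   equi_prod (k - 1) (n - x) (AM-GM in integers). So it suffices that this quantity is at
   most the increment of equi_value k at n - 1. Passing from m to m + 1 raises one
   smallest part q = m div k of the equipartition, so the increment D satisfies
   D m = D q + equi_prod (k - 1) (m - q), and the required inequality follows by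
   induction on m from the discrete convexity of equi_prod (k - 1). *)

definition equipartition :: "nat \<Rightarrow> nat \<Rightarrow> nat list" where
  "equipartition j m = replicate (m mod j) (Suc (m div j)) @ replicate (j - m mod j) (m div j)"

lemma equipartition_eq:
  assumes "r < j"
  shows "equipartition j (q * j + r) = replicate r (Suc q) @ replicate (j - r) q"
  using assms by (simp add: equipartition_def)

lemma length_equipartition [simp]: "0 < j \<Longrightarrow> length (equipartition j m) = j"
  by (simp add: equipartition_def)

lemma sum_list_equipartition [simp]: "0 < j \<Longrightarrow> sum_list (equipartition j m) = m"
proof -
  assume "0 < j"
  then have "m mod j * Suc (m div j) + (j - m mod j) * (m div j) = m div j * j + m mod j"
    by (simp add: algebra_simps diff_mult_distrib)
  then show ?thesis by (simp add: equipartition_def sum_list_replicate)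
qed

lemma set_equipartition: "set (equipartition j m) \<subseteq> {m div j, Suc (m div j)}"
  by (auto simp: equipartition_def)

lemma equipartition_mult: "equipartition j (q * j) = replicate j q"
  by (cases "j = 0") (simp_all add: equipartition_def)

lemma equipartition_diff_div:
  assumes "1 \<le> j"
  shows "equipartition (j - 1) (m - m div j)
           = replicate (m mod j) (Suc (m div j)) @ replicate (j - 1 - m mod j) (m div j)"
proof -
  define q r where "q = m div j" and "r = m mod j"
  have m: "m = q * j + r" and "r < j" using assms by (simp_all add: q_def r_def)
  show ?thesis
  proof (cases "r < j - 1")
    case True
    have "m - q = q * (j - 1) + r" using m assms by (simp add: algebra_simps diff_mult_distrib2)
    then show ?thesis using True by (simp add: q_def r_def equipartition_eq)
  next
    case False
    then have r: "r = j - 1" using \<open>r < j\<close> by simp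
    then have "m - q = Suc q * (j - 1)" using m assms by (simp add: algebra_simps diff_mult_distrib2)
    then have "equipartition (j - 1) (m - q) = replicate (j - 1) (Suc q)"
      by (simp only: equipartition_mult)
    then show ?thesis using r by (simp add: q_def r_def)
  qed
qed

lemma equipartition_snoc:
  assumes "1 \<le> j"
  shows "equipartition j m = equipartition (j - 1) (m - m div j) @ [m div j]"
proof -
  have "j - m mod j = Suc (j - 1 - m mod j)" using assms by (simp add: Suc_diff_Suc)
  then show ?thesis
    unfolding equipartition_diff_div[OF assms] by (simp add: equipartition_def replicate_append_same)
qed

lemma equipartition_Suc:
  assumes "1 \<le> j"
  shows "equipartition j (Suc m) = Suc (m div j) # equipartition (j - 1) (m - m div j)"
proof -
  define q r where "q = m div j" and "r = m mod j"
  have m: "m = q * j + r" and "r < j" using assms by (simp_all add: q_def r_def)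
  show ?thesis
  proof (cases "Suc r < j")
    case True
    then have "equipartition j (Suc m) = replicate (Suc r) (Suc q) @ replicate (j - Suc r) q"
      using m equipartition_eq[OF True, of q] by simp
    then show ?thesis unfolding equipartition_diff_div[OF assms] by (simp add: q_def r_def)
  next
    case False
    then have r: "r = j - 1" using \<open>r < j\<close> by simp
    then have "Suc m = Suc q * j" using m assms by simp
    then have "equipartition j (Suc m) = replicate j (Suc q)" by (simp only: equipartition_mult)
    moreover have "replicate j (Suc q) = Suc q # replicate (j - 1) (Suc q)"
      using assms by (cases j) simp_all
    ultimately show ?thesis unfolding equipartition_diff_div[OF assms] using r
      by (simp add: q_def r_def)
  qed
qed

definition equi_prod :: "nat \<Rightarrow> nat \<Rightarrow> nat" where
  "equi_prod j m = prod_list (equipartition j m)"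

lemma equi_prod_zero: "1 \<le> j \<Longrightarrow> equi_prod j 0 = 0"
  by (simp add: equi_prod_def equipartition_def)

lemma equi_prod_Suc:
  assumes "1 \<le> j"
  shows "equi_prod j (Suc m) = equi_prod j m + equi_prod (j - 1) (m - m div j)"
  unfolding equi_prod_def equipartition_Suc[OF assms] equipartition_snoc[OF assms, of m]
  by simp

lemma mono_equi_prod: "mono (equi_prod j)"
proof (cases "j = 0")
  case True
  then show ?thesis by (simp add: mono_def equi_prod_def equipartition_def)
next
  case False
  then show ?thesis by (simp add: mono_iff_le_Suc equi_prod_Suc)
qed

lemma diff_div_mono:
  fixes k :: nat
  assumes "m1 \<le> m2"
  shows "m1 - m1 div k \<le> m2 - m2 div k"
proof -
  have "m - m div k \<le> Suc m - Suc m div k" for m :: nat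
    using div_le_dividend[of m k] div_le_dividend[of "Suc m" k] div_Suc[of m k] by (simp split: if_splits)
  then show ?thesis using assms by (rule lift_Suc_mono_le)
qed

lemma equi_prod_convex:
  assumes "1 \<le> j" "x + y = u + v" "x \<le> v" "y \<le> v"
  shows "equi_prod j x + equi_prod j y \<le> equi_prod j u + equi_prod j v"
proof -
  have increment_mono: "equi_prod j (a + d) + equi_prod j b \<le> equi_prod j (b + d) + equi_prod j a"
    if "a \<le> b" for a b d
  proof (induction d)
    case (Suc d)
    have "equi_prod (j - 1) ((a + d) - (a + d) div j) \<le> equi_prod (j - 1) ((b + d) - (b + d) div j)"
      using that by (intro monoD[OF mono_equi_prod] diff_div_mono) simp
    then show ?case using Suc equi_prod_Suc[OF assms(1), of "a + d"] equi_prod_Suc[OF assms(1), of "b + d"]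
      by simp
  qed simp
  have "u \<le> y" "x = u + (x - u)" "v = y + (x - u)" using assms by auto
  then show ?thesis using increment_mono[of u y "x - u"] by (simp add: add.commute)
qed

lemma Suc_div_less:
  fixes k n :: nat
  assumes "3 \<le> k" "k \<le> n"
  shows "Suc (n div k) < n"
proof -
  have "n div k \<le> n div 3" using assms(1) by (simp add: div_le_mono2)
  then show ?thesis using assms by linarith
qed

(* The guard k < 3 only serves termination; for k \<ge> 3 see equi_value_rec. *)
function equi_value :: "nat \<Rightarrow> nat \<Rightarrow> nat" where
  "equi_value k n = (if n < k \<or> k < 3 then 0
     else sum_list (map (equi_value k) (equipartition k n)) + equi_prod k n)"
  by auto
termination
proof (relation "measure snd")
  fix k n x
  assume "\<not> (n < k \<or> k < 3)" "x \<in> set (equipartition k n)"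
  then show "((k, x), k, n) \<in> measure snd"
    using set_equipartition[of k n] Suc_div_less[of k n] by auto
qed simp

declare equi_value.simps [simp del]

lemma equi_value_small: "n < k \<Longrightarrow> equi_value k n = 0"
  by (simp add: equi_value.simps)

lemma equi_value_rec:
  assumes "3 \<le> k"
  shows "equi_value k n = sum_list (map (equi_value k) (equipartition k n)) + equi_prod k n"
proof (cases "n < k")
  case True
  then have "equipartition k n = replicate n 1 @ replicate (k - n) 0"
    by (simp add: equipartition_def)
  then show ?thesis using True assms by (simp add: equi_value_small equi_prod_def)
next
  case False
  then show ?thesis using assms by (simp add: equi_value.simps)
qed

definition equi_value_incr :: "nat \<Rightarrow> nat \<Rightarrow> int" where
  "equi_value_incr k m = int (equi_value k (Suc m)) - int (equi_value k m)"

lemma equi_value_incr_rec: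
  assumes "3 \<le> k"
  shows "equi_value_incr k m = equi_value_incr k (m div k) + int (equi_prod (k - 1) (m - m div k))"
proof -
  have "1 \<le> k" using assms by simp
  show ?thesis
    unfolding equi_value_incr_def equi_value_rec[OF assms, of m] equi_value_rec[OF assms, of "Suc m"]
      equipartition_Suc[OF \<open>1 \<le> k\<close>] equipartition_snoc[OF \<open>1 \<le> k\<close>, of m] equi_prod_Suc[OF \<open>1 \<le> k\<close>]
    by simp
qed

lemma equi_value_incr_bound:
  assumes "3 \<le> k"
  shows "b \<le> m \<Longrightarrow> m < k * Suc b \<Longrightarrow>
    equi_value_incr k b + int (equi_prod (k - 1) (m - b)) \<le> equi_value_incr k m"
proof (induction m arbitrary: b rule: less_induct)
  case (less m)
  show ?case
  proof (cases "m = 0")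
    case True
    then show ?thesis using less.prems assms by (simp add: equi_prod_zero)
  next
    case False
    define m' b' where "m' = m div k" and "b' = b div k"
    have "m' < m" unfolding m'_def using False assms by simp
    have "b' \<le> m'" unfolding b'_def m'_def using less.prems by (simp add: div_le_mono)
    have "m' \<le> b" unfolding m'_def using less.prems less_mult_imp_div_less[of m "Suc b" k]
      by (simp add: mult.commute)
    moreover have "b < k * Suc b'"
      unfolding b'_def using dividend_less_times_div[of k b] assms by simp
    ultimately have "m' < k * Suc b'" by simp
    then have IH: "equi_value_incr k b' + int (equi_prod (k - 1) (m' - b')) \<le> equi_value_incr k m'"
      using less.IH[OF \<open>m' < m\<close> \<open>b' \<le> m'\<close>] by simp
    have "b - b' \<le> m - m'" unfolding b'_def m'_def using less.prems by (intro diff_div_mono) simp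
    then have "equi_prod (k - 1) (b - b') + equi_prod (k - 1) (m - b)
        \<le> equi_prod (k - 1) (m' - b') + equi_prod (k - 1) (m - m')"
      using assms less.prems \<open>b' \<le> m'\<close> \<open>m' \<le> b\<close> by (intro equi_prod_convex) auto
    then show ?thesis using IH equi_value_incr_rec[OF assms, of m] equi_value_incr_rec[OF assms, of b]
      unfolding m'_def b'_def by linarith
  qed
qed

lemma multiset_split_Max:
  fixes M :: "nat multiset"
  assumes "M \<noteq> {#}"
  obtains x R where "M = add_mset x R" "sum_mset M \<le> size M * x"
proof
  let ?x = "Max_mset M"
  have "?x \<in># M" using assms by simp
  then show "M = add_mset ?x (M - {#?x#})" by simp
  have "sum_mset (image_mset id M) \<le> sum_mset (image_mset (\<lambda>_. ?x) M)"
    by (rule sum_mset_mono) simp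
  then show "sum_mset M \<le> size M * ?x" by (simp add: sum_mset_constant)
qed

lemma prod_mset_le_equi_prod:
  fixes M :: "nat multiset"
  assumes "M \<noteq> {#}"
  shows "prod_mset M \<le> equi_prod (size M) (sum_mset M)"
  using assms
proof (induction "sum_mset M" arbitrary: M rule: less_induct)
  case less
  show ?case
  proof (cases "size M = 1")
    case True
    then obtain x where "M = {#x#}" using size_1_singleton_mset by blast
    then show ?thesis by (simp add: equi_prod_def equipartition_def)
  next
    case False
    obtain x R where M: "M = add_mset x R" and sum_le: "sum_mset M \<le> size M * x"
      using multiset_split_Max[OF less.prems] .
    show ?thesis
    proof (cases "sum_mset M")
      case 0
      then show ?thesis using M by simp
    next
      case (Suc m)
      define j where "j = size M"
      have "1 \<le> x" using Suc sum_le by (cases x) auto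
      have R: "R \<noteq> {#}" "size R = j - 1" using False M by (auto simp: j_def)
      define M' where "M' = add_mset (x - 1) R"
      have "sum_mset M' = m" "size M' = j" using Suc M \<open>1 \<le> x\<close> by (auto simp: M'_def j_def)
      then have IH_M': "prod_mset M' \<le> equi_prod j m"
        using less.hyps[of M'] Suc by (simp add: M'_def)
      have "m div j < x" using sum_le Suc less_mult_imp_div_less[of m x j] by (simp add: j_def mult.commute)
      then have "sum_mset R \<le> m - m div j" using Suc M by simp
      moreover have "prod_mset R \<le> equi_prod (j - 1) (sum_mset R)"
        using less.hyps[of R] R Suc M \<open>1 \<le> x\<close> by simp
      ultimately have IH_R: "prod_mset R \<le> equi_prod (j - 1) (m - m div j)"
        using monoD[OF mono_equi_prod] le_trans by blast
      have "prod_mset M = prod_mset M' + prod_mset R"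
        using M \<open>1 \<le> x\<close> by (cases x) (simp_all add: M'_def)
      also have "\<dots> \<le> equi_prod j (Suc m)"
        using IH_M' IH_R equi_prod_Suc[of j m] M by (simp add: j_def)
      finally show ?thesis using Suc by (simp add: j_def)
    qed
  qed
qed

lemma sum_equi_value_plus_prod_le:
  fixes M :: "nat multiset"
  assumes k: "3 \<le> k" and "size M = k"
  shows "sum_mset (image_mset (equi_value k) M) + prod_mset M \<le> equi_value k (sum_mset M)"
  using assms(2)
proof (induction "sum_mset M" arbitrary: M)
  case 0
  then have zero: "\<forall>y\<in>#M. y = 0" by simp
  obtain y where "y \<in># M" using 0 k by (metis multiset_nonemptyE size_empty not_numeral_le_zero)
  then have prod_0: "prod_mset M = 0" using zero by auto
  have sum_0: "sum_mset (image_mset (equi_value k) M) = 0" using zero k by (auto simp: equi_value_small)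
  show ?case unfolding prod_0 sum_0 by simp
next
  case (Suc m)
  then have "M \<noteq> {#}" using k by auto
  then obtain x R where M: "M = add_mset x R" and sum_le: "sum_mset M \<le> size M * x"
    by (rule multiset_split_Max)
  have "Suc m \<le> k * x" using sum_le by (simp only: Suc.prems flip: Suc.hyps(2))
  then have "1 \<le> x" by (cases x) auto
  have "x \<le> Suc m" using Suc.hyps(2) M by simp
  define M' where "M' = add_mset (x - 1) R"
  have "sum_mset M' = m" "size M' = k" using Suc.hyps(2) Suc.prems M \<open>1 \<le> x\<close> by (auto simp: M'_def)
  then have IH: "sum_mset (image_mset (equi_value k) M') + prod_mset M' \<le> equi_value k m"
    using Suc.hyps(1)[of M'] by simp
  have sum_M: "sum_mset (image_mset (equi_value k) M) + equi_value k (x - 1)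
      = sum_mset (image_mset (equi_value k) M') + equi_value k x"
    using M \<open>1 \<le> x\<close> by (simp add: M'_def)
  have prod_M: "prod_mset M = prod_mset M' + prod_mset R"
    using M \<open>1 \<le> x\<close> by (cases x) (simp_all add: M'_def)
  have "R \<noteq> {#}" "size R = k - 1" using Suc.prems M k by auto
  then have prod_R: "prod_mset R \<le> equi_prod (k - 1) (m - (x - 1))"
    using prod_mset_le_equi_prod[of R] Suc.hyps(2) M \<open>1 \<le> x\<close> by simp
  have "equi_value_incr k (x - 1) + int (equi_prod (k - 1) (m - (x - 1))) \<le> equi_value_incr k m"
    using equi_value_incr_bound[OF k, of "x - 1" m] \<open>Suc m \<le> k * x\<close> \<open>1 \<le> x\<close> \<open>x \<le> Suc m\<close>
    by simp
  then have "int (equi_value k x) - int (equi_value k (x - 1)) + int (equi_prod (k - 1) (m - (x - 1)))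
      \<le> int (equi_value k (Suc m)) - int (equi_value k m)"
    using \<open>1 \<le> x\<close> by (simp add: equi_value_incr_def)
  then show ?case unfolding Suc.hyps(2)[symmetric] using IH sum_M prod_M prod_R by linarith
qed

lemma finite_parts: "finite (parts k n)"
proof (rule finite_subset)
  show "parts k n \<subseteq> {xs. set xs \<subseteq> {..n} \<and> length xs = k}"
    unfolding parts_def by (auto simp: member_le_sum_list)
  show "finite {xs. set xs \<subseteq> {..n} \<and> length xs = k}"
    by (rule finite_lists_length_eq) simp
qed

lemma equipartition_in_parts:
  assumes "3 \<le> k" "k \<le> n"
  shows "equipartition k n \<in> parts k n"
  using assms set_equipartition[of k n] Suc_div_less[OF assms] by (auto simp: parts_def)

declare g.simps [simp del]

lemma g_eq_equi_value:
  assumes k: "3 \<le> k"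
  shows "g k n = equi_value k n"
proof (induction n rule: less_induct)
  case (less n)
  show ?case
  proof (cases "n < k")
    case True
    then show ?thesis by (simp add: g.simps equi_value_small)
  next
    case False
    let ?value = "\<lambda>xs. sum_list (map (g k) xs) + prod_list xs"
    have value_eq: "?value xs = sum_list (map (equi_value k) xs) + prod_list xs"
      if "xs \<in> parts k n" for xs
    proof -
      have "map (g k) xs = map (equi_value k) xs"
        using that less.IH unfolding parts_def by (intro map_cong) auto
      then show ?thesis by (simp only:)
    qed
    have "g k n = Max (?value ` parts k n)" using False by (simp add: g.simps)
    also have "\<dots> = equi_value k n"
    proof (rule Max_eqI)
      show "finite (?value ` parts k n)" by (simp add: finite_parts)
      show "y \<le> equi_value k n" if "y \<in> ?value ` parts k n" for y
      proof -
        obtain xs where xs: "xs \<in> parts k n" "y = ?value xs" using \<open>y \<in> ?value ` parts k n\<close> by blast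
        then have "size (mset xs) = k" "sum_list xs = n" by (simp_all add: parts_def)
        then show ?thesis using xs value_eq sum_equi_value_plus_prod_le[OF k, of "mset xs"]
          by (simp add: sum_mset_sum_list prod_mset_prod_list flip: mset_map)
      qed
      have "equipartition k n \<in> parts k n" using False k by (simp add: equipartition_in_parts)
      moreover have "?value (equipartition k n) = equi_value k n"
        using value_eq[OF calculation] equi_value_rec[OF k, of n] by (simp add: equi_prod_def)
      ultimately show "equi_value k n \<in> ?value ` parts k n" by (rule rev_image_eqI[OF _ sym])
    qed
    finally show ?thesis .
  qed
qed

theorem lemma4p2:
  fixes k n :: nat
  assumes "3 \<le> k" and "k \<le> n"
  shows "\<exists>ns. length ns = k \<and> sum_list ns = n
           \<and> (\<forall>i<k. \<forall>j<k. i \<noteq> j \<longrightarrow> \<bar>int (ns ! i) - int (ns ! j)\<bar> \<le> 1)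
           \<and> g k n = sum_list (map (g k) ns) + prod_list ns"
proof (intro exI conjI)
  let ?ns = "equipartition k n"
  have k: "0 < k" using assms(1) by simp
  show "length ?ns = k" "sum_list ?ns = n" using k by simp_all
  show "\<forall>i<k. \<forall>j<k. i \<noteq> j \<longrightarrow> \<bar>int (?ns ! i) - int (?ns ! j)\<bar> \<le> 1"
  proof (intro allI impI)
    fix i j assume "i < k" "j < k"
    then have "?ns ! i \<in> set ?ns" "?ns ! j \<in> set ?ns" using k by simp_all
    then have "?ns ! i \<in> {n div k, Suc (n div k)}" "?ns ! j \<in> {n div k, Suc (n div k)}"
      using set_equipartition[of k n] by blast+
    then show "\<bar>int (?ns ! i) - int (?ns ! j)\<bar> \<le> 1" by auto
  qed
  have "g k = equi_value k" using g_eq_equi_value[OF assms(1)] by blast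
  then show "g k n = sum_list (map (g k) ?ns) + prod_list ?ns"
    using equi_value_rec[OF assms(1), of n] by (simp add: equi_prod_def)
qed

end
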